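(* A matrix $A\in\mathcal{C}_n$ is irreducible with respect to the cone $S_+(n)$ if and only if the linear span of the set of minimal zeros of $A$ equals $\mathbb{R}^n$. In particular, in that case $A$ has at least $n$ linearly independent minimal zeros.
   Context: $\mathcal{C}_n$ denotes the cone of copositive matrices: real symmetric $n\times n$ matrices $A$ with $x^TAx\ge 0$ for all $x\in\mathbb{R}^n_+$. $S_+(n)$ is the cone of positive semidefinite $n\times n$ matrices. For $A\in\mathcal{C}_n$, a zero of $A$ is a nonzero vector $u\in\mathbb{R}^n_+$ with $u^TAu=0$; its support is $\operatorname{Supp}(u)=\{i:u_i\ne0\}$; a zero $u$ is minimal if there is no zero $v$ with $\operatorname{Supp}(v)\subsetneq\operatorname{Supp}(u)$. For $A\in\mathcal{C}_n$ and $\mathcal{M}\subset\mathcal{C}_n$, $A$ is irreducible with respect to $\mathcal{M}$ if there do not exist $\gamma>0$ and $M\in\mathcal{M}\setminus\{0\}$ with $A-\gamma M\in\mathcal{C}_n$. *)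

theory Defs
  imports "HOL-Analysis.Analysis"
begin

text \<open>Real symmetric n x n matrices are represented as real^'n^'n with transpose A = A;
  the dimension n is CARD('n).\<close>

definition nonneg_vec :: "real^'n \<Rightarrow> bool" where
  "nonneg_vec x \<longleftrightarrow> (\<forall>i. 0 \<le> x $ i)"

definition copositive :: "real^'n^'n \<Rightarrow> bool" where
  "copositive A \<longleftrightarrow> transpose A = A \<and> (\<forall>x. nonneg_vec x \<longrightarrow> 0 \<le> x \<bullet> (A *v x))"

definition psd :: "real^'n^'n \<Rightarrow> bool" where
  "psd A \<longleftrightarrow> transpose A = A \<and> (\<forall>x. 0 \<le> x \<bullet> (A *v x))"

definition is_zero_of :: "real^'n^'n \<Rightarrow> real^'n \<Rightarrow> bool" where
  "is_zero_of A u \<longleftrightarrow> u \<noteq> 0 \<and> nonneg_vec u \<and> u \<bullet> (A *v u) = 0"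

definition supp :: "real^'n \<Rightarrow> 'n set" where
  "supp u = {i. u $ i \<noteq> 0}"

definition is_minimal_zero :: "real^'n^'n \<Rightarrow> real^'n \<Rightarrow> bool" where
  "is_minimal_zero A u \<longleftrightarrow> is_zero_of A u \<and> \<not> (\<exists>v. is_zero_of A v \<and> supp v \<subset> supp u)"

definition irreducible_wrt :: "real^'n^'n \<Rightarrow> (real^'n^'n) set \<Rightarrow> bool" where
  "irreducible_wrt A \<M> \<longleftrightarrow>
     \<not> (\<exists>\<gamma>>0. \<exists>M \<in> \<M> - {0}. copositive (A - \<gamma> *\<^sub>R M))"

end

theory Submission
  imports Defs
begin

text \<open>
  A zero \<open>u\<close> of a copositive \<open>A\<close> minimises the quadratic form on the nonnegative orthant, so
  \<open>A u \<ge> 0\<close> with \<open>(A u)\<^sub>i = 0\<close> on the support of \<open>u\<close>. Hence subtracting from a zero the largest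
  admissible multiple of a zero with smaller support leaves a zero (or \<open>0\<close>), and by induction on
  the support every zero lies in the span of the minimal zeros.

  If \<open>A - \<gamma> M\<close> is copositive with \<open>M\<close> positive semidefinite, then \<open>u\<^sup>T M u = 0\<close> and thus
  \<open>M u = 0\<close> for every zero \<open>u\<close>; if the minimal zeros span everything, \<open>M = 0\<close>.
  Conversely, if \<open>a \<noteq> 0\<close> is orthogonal to all zeros, \<open>A - \<epsilon> a a\<^sup>T\<close> is copositive for small \<open>\<epsilon>\<close>:
  take a minimiser \<open>x\<close> of its quadratic form on the standard simplex. If no zero of \<open>A\<close> is
  supported in \<open>supp x\<close>, then \<open>A\<close> is bounded away from \<open>0\<close> on that face and the perturbation
  is too small to matter. If a zero \<open>u\<close> is, the optimality conditions make the gradient constant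
  on \<open>supp x\<close>, so \<open>u\<^sup>T (A - \<epsilon> a a\<^sup>T) x\<close> is the minimum times \<open>\<Sum>u\<^sub>i\<close>, while it also equals
  \<open>x\<^sup>T A u \<ge> 0\<close>.
\<close>

lemma linear_coeff_nonneg:
  fixes p q d :: real
  assumes "0 < d" and "\<And>t. 0 < t \<Longrightarrow> t < d \<Longrightarrow> 0 \<le> t * p + t\<^sup>2 * q"
  shows "0 \<le> p"
proof (rule tendsto_lowerbound)
  show "((\<lambda>t. p + t * q) \<longlongrightarrow> p) (at_right 0)"
    by (auto intro!: tendsto_eq_intros)
  show "\<forall>\<^sub>F t in at_right 0. 0 \<le> p + t * q"
    using eventually_at_right_real[OF assms(1)]
  proof (rule eventually_mono)
    fix t assume "t \<in> {0<..<d}"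
    with assms(2)[of t] have "0 \<le> t * (p + t * q)"
      by (simp add: power2_eq_square algebra_simps)
    with \<open>t \<in> {0<..<d}\<close> show "0 \<le> p + t * q"
      by (simp add: zero_le_mult_iff)
  qed
qed simp

lemma inner_matrix_vector_mult_commute:
  fixes C :: "real^'n^'n"
  assumes "transpose C = C"
  shows "x \<bullet> (C *v y) = y \<bullet> (C *v x)"
  by (metis assms dot_lmul_matrix inner_commute vector_transpose_matrix)

lemma quadratic_form_add_scaleR:
  fixes C :: "real^'n^'n"
  assumes "transpose C = C"
  shows "(x + t *\<^sub>R d) \<bullet> (C *v (x + t *\<^sub>R d)) =
    x \<bullet> (C *v x) + t * (2 * (d \<bullet> (C *v x))) + t\<^sup>2 * (d \<bullet> (C *v d))"
  using inner_matrix_vector_mult_commute[OF assms, of x d]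
  by (simp add: algebra_simps inner_add_left inner_add_right power2_eq_square)

lemma quadratic_form_eq_sum: "x \<bullet> (C *v y) = (\<Sum>i\<in>UNIV. x $ i * (C *v y) $ i)"
  by (simp add: inner_vec_def)

lemma psd_mult_eq_0_if_quadratic_form_eq_0:
  fixes M :: "real^'n^'n"
  assumes "psd M" and "u \<bullet> (M *v u) = 0"
  shows "M *v u = 0"
proof -
  have sym: "transpose M = M" using assms(1) by (simp add: psd_def)
  have "0 \<le> v \<bullet> (M *v u)" for v
  proof -
    have "0 \<le> 2 * (v \<bullet> (M *v u))"
    proof (rule linear_coeff_nonneg[of 1])
      fix t :: real
      show "0 \<le> t * (2 * (v \<bullet> (M *v u))) + t\<^sup>2 * (v \<bullet> (M *v v))"
        using assms quadratic_form_add_scaleR[OF sym, of u t v] unfolding psd_def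
        by (metis add_0)
    qed simp
    thus ?thesis by simp
  qed
  from this[of "- (M *v u)"] have "(M *v u) \<bullet> (M *v u) \<le> 0" by simp
  thus ?thesis by (metis inner_eq_zero_iff inner_ge_zero order_antisym)
qed

lemma zero_of_copositive_mult_nonneg:
  fixes A :: "real^'n^'n"
  assumes "copositive A" and "is_zero_of A u"
  shows "0 \<le> (A *v u) $ i"
proof -
  have sym: "transpose A = A" using assms(1) by (simp add: copositive_def)
  have "0 \<le> 2 * (axis i 1 \<bullet> (A *v u))"
  proof (rule linear_coeff_nonneg[of 1])
    fix t :: real assume "0 < t"
    with assms(2) have "nonneg_vec (u + t *\<^sub>R axis i 1)"
      unfolding is_zero_of_def nonneg_vec_def by (auto simp: axis_def)
    with assms(1) have "0 \<le> (u + t *\<^sub>R axis i 1) \<bullet> (A *v (u + t *\<^sub>R axis i 1))"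
      by (simp add: copositive_def)
    thus "0 \<le> t * (2 * (axis i 1 \<bullet> (A *v u))) + t\<^sup>2 * (axis i 1 \<bullet> (A *v axis i 1))"
      using quadratic_form_add_scaleR[OF sym, of u t "axis i 1"] assms(2)
      by (simp add: is_zero_of_def)
  qed simp
  thus ?thesis by (simp add: inner_axis')
qed

lemma zero_of_copositive_mult_eq_0:
  fixes A :: "real^'n^'n"
  assumes "copositive A" and "is_zero_of A u" and "u $ i \<noteq> 0"
  shows "(A *v u) $ i = 0"
proof -
  have nonneg: "0 \<le> u $ j * (A *v u) $ j" for j
    using zero_of_copositive_mult_nonneg[OF assms(1,2)] assms(2)
    by (simp add: is_zero_of_def nonneg_vec_def)
  have "(\<Sum>j\<in>UNIV. u $ j * (A *v u) $ j) = 0"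
    using assms(2) by (simp add: is_zero_of_def quadratic_form_eq_sum)
  hence "u $ i * (A *v u) $ i = 0"
    using sum_nonneg_eq_0_iff[of UNIV "\<lambda>j. u $ j * (A *v u) $ j"] nonneg by simp
  with assms(3) show ?thesis by simp
qed

lemma zero_of_copositive_inner_eq_0:
  fixes A :: "real^'n^'n"
  assumes "copositive A" and "is_zero_of A u" and "supp v \<subseteq> supp u"
  shows "v \<bullet> (A *v u) = 0"
  unfolding quadratic_form_eq_sum
  using zero_of_copositive_mult_eq_0[OF assms(1,2)] assms(3)
  by (intro sum.neutral) (auto simp: supp_def)

lemma zero_of_copositive_diff:
  fixes A :: "real^'n^'n"
  assumes "copositive A" and "is_zero_of A u" and "is_zero_of A v" and "supp v \<subseteq> supp u"
    and "nonneg_vec (u - t *\<^sub>R v)" and "u - t *\<^sub>R v \<noteq> 0"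
  shows "is_zero_of A (u - t *\<^sub>R v)"
proof -
  have "transpose A = A" using assms(1) by (simp add: copositive_def)
  from quadratic_form_add_scaleR[OF this, of u "-t" v] show ?thesis
    using zero_of_copositive_inner_eq_0[OF assms(1,2,4)] assms(2,3,5,6)
    by (simp add: is_zero_of_def)
qed

text \<open>The largest \<open>t\<close> with \<open>u - t v \<ge> 0\<close> kills a coordinate of \<open>u\<close>.\<close>

lemma exists_scaleR_diff_supp_psubset:
  fixes u v :: "real^'n"
  assumes "nonneg_vec u" and "nonneg_vec v" and "v \<noteq> 0" and "supp v \<subseteq> supp u"
  obtains t where "0 < t" and "nonneg_vec (u - t *\<^sub>R v)" and "supp (u - t *\<^sub>R v) \<subset> supp u"
proof -
  define t where "t = Min ((\<lambda>i. u $ i / v $ i) ` supp v)"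
  have pos: "0 < v $ i" "0 < u $ i" if "i \<in> supp v" for i
    using that assms(1,2,4) by (auto simp: supp_def nonneg_vec_def less_le)
  have "supp v \<noteq> {}" using assms(3) by (auto simp: supp_def vec_eq_iff)
  hence "t \<in> (\<lambda>i. u $ i / v $ i) ` supp v"
    unfolding t_def by (intro Min_in) auto
  then obtain i0 where i0: "i0 \<in> supp v" "t = u $ i0 / v $ i0" by blast
  have t_le: "t * v $ i \<le> u $ i" if "i \<in> supp v" for i
  proof -
    have "t \<le> u $ i / v $ i" unfolding t_def using that by (intro Min_le) auto
    with pos[OF that] show ?thesis by (simp add: le_divide_eq)
  qed
  show thesis
  proof
    show "0 < t" using i0 pos[OF i0(1)] by simp
    show "nonneg_vec (u - t *\<^sub>R v)"
      unfolding nonneg_vec_def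
    proof
      fix i
      show "0 \<le> (u - t *\<^sub>R v) $ i"
        using t_le[of i] assms(1) by (cases "i \<in> supp v") (auto simp: supp_def nonneg_vec_def)
    qed
    have "i0 \<in> supp u - supp (u - t *\<^sub>R v)"
      using i0 pos[OF i0(1)] by (auto simp: supp_def)
    moreover have "supp (u - t *\<^sub>R v) \<subseteq> supp u"
      using assms(4) by (auto simp: supp_def)
    ultimately show "supp (u - t *\<^sub>R v) \<subset> supp u" by blast
  qed
qed

lemma zero_in_span_minimal_zeros:
  fixes A :: "real^'n^'n"
  assumes "copositive A" and "is_zero_of A u"
  shows "u \<in> span {v. is_minimal_zero A v}"
  using assms(2)
proof (induction "card (supp u)" arbitrary: u rule: less_induct)
  case less
  show ?case
  proof (cases "is_minimal_zero A u")
    case True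
    thus ?thesis by (simp add: span_base)
  next
    case False
    with less.prems obtain v where v: "is_zero_of A v" "supp v \<subset> supp u"
      by (auto simp: is_minimal_zero_def)
    with less have v_span: "v \<in> span {v. is_minimal_zero A v}"
      by (meson finite psubset_card_mono)
    obtain t where t: "nonneg_vec (u - t *\<^sub>R v)" "supp (u - t *\<^sub>R v) \<subset> supp u"
      using exists_scaleR_diff_supp_psubset[of u v] less.prems v(1) psubset_imp_subset[OF v(2)]
      by (metis is_zero_of_def)
    have "u - t *\<^sub>R v \<in> span {v. is_minimal_zero A v}"
    proof (cases "u - t *\<^sub>R v = 0")
      case False
      with assms(1) less.prems v t(1) have "is_zero_of A (u - t *\<^sub>R v)"
        by (intro zero_of_copositive_diff) auto
      with t(2) less.hyps show ?thesis by (meson finite psubset_card_mono)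
    qed (simp add: span_zero)
    with v_span have "(u - t *\<^sub>R v) + t *\<^sub>R v \<in> span {v. is_minimal_zero A v}"
      by (intro span_add span_mul)
    thus ?thesis by simp
  qed
qed

definition outer :: "real^'n \<Rightarrow> real^'n^'n" where
  "outer a = (\<chi> i j. a $ i * a $ j)"

lemma outer_mult_vec: "outer a *v x = (a \<bullet> x) *\<^sub>R a"
  by (simp add: outer_def matrix_vector_mult_def vec_eq_iff inner_vec_def sum_distrib_left
      algebra_simps)

lemma transpose_outer: "transpose (outer a) = outer a"
  by (simp add: outer_def transpose_def vec_eq_iff mult.commute)

lemma psd_outer: "psd (outer a)"
  by (simp add: psd_def transpose_outer outer_mult_vec inner_commute)

lemma outer_eq_0_iff: "outer a = 0 \<longleftrightarrow> a = 0"
  by (auto simp: outer_def vec_eq_iff)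

lemma inner_diff_outer_mult_vec:
  "x \<bullet> ((A - c *\<^sub>R outer a) *v y) = x \<bullet> (A *v y) - c * ((a \<bullet> x) * (a \<bullet> y))"
  by (simp add: matrix_vector_mult_diff_rdistrib scaleR_matrix_vector_assoc[symmetric]
      outer_mult_vec inner_diff_right inner_commute)

lemma transpose_diff_outer:
  "transpose A = A \<Longrightarrow> transpose (A - c *\<^sub>R outer a) = A - c *\<^sub>R outer a"
  by (simp add: transpose_def vec_eq_iff outer_def mult.commute)

definition standard_simplex :: "(real^'n) set" where
  "standard_simplex = {x. nonneg_vec x \<and> (\<Sum>i\<in>UNIV. x $ i) = 1}"

lemma standard_simplex_norm_le_1: "x \<in> standard_simplex \<Longrightarrow> norm x \<le> 1"
  using norm_le_l1_cart[of x] by (simp add: standard_simplex_def nonneg_vec_def)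

lemma standard_simplex_inner_square_le:
  assumes "x \<in> standard_simplex"
  shows "(a \<bullet> x)\<^sup>2 \<le> (norm a)\<^sup>2"
proof -
  have "\<bar>a \<bullet> x\<bar> \<le> norm a"
    using Cauchy_Schwarz_ineq2[of a x] standard_simplex_norm_le_1[OF assms]
    by (meson mult_left_le norm_ge_zero order_trans)
  thus ?thesis by (metis abs_ge_zero power2_abs power_mono)
qed

lemma compact_standard_simplex_face: "compact (standard_simplex \<inter> {x. supp x \<subseteq> J})"
proof (rule compact_eq_bounded_closed[THEN iffD2], rule conjI)
  show "bounded (standard_simplex \<inter> {x. supp x \<subseteq> J})"
    by (rule bounded_subset[OF bounded_cball[of 0 1]]) (auto dest: standard_simplex_norm_le_1)
  have "standard_simplex \<inter> {x. supp x \<subseteq> J} =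
     (\<Inter>i. {x. 0 \<le> x $ i}) \<inter> {x. (\<Sum>i\<in>UNIV. x $ i) = 1} \<inter> (\<Inter>i\<in>-J. {x. x $ i = 0})"
    by (auto simp: standard_simplex_def nonneg_vec_def supp_def)
  thus "closed (standard_simplex \<inter> {x. supp x \<subseteq> J})"
    by (auto intro!: closed_Int closed_INT closed_Collect_le closed_Collect_eq continuous_intros)
qed

lemma continuous_on_quadratic_form: "continuous_on S (\<lambda>x::real^'n. x \<bullet> (C *v x))"
  by (intro continuous_intros linear_continuous_on matrix_vector_mul_linear)

lemma copositive_if_standard_simplex:
  fixes B :: "real^'n^'n"
  assumes "transpose B = B" and "\<And>x. x \<in> standard_simplex \<Longrightarrow> 0 \<le> x \<bullet> (B *v x)"
  shows "copositive B"
  unfolding copositive_def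
proof (intro conjI allI impI assms(1))
  fix x :: "real^'n" assume x: "nonneg_vec x"
  define s where "s = (\<Sum>i\<in>UNIV. x $ i)"
  show "0 \<le> x \<bullet> (B *v x)"
  proof (cases "s = 0")
    case True
    with x have "x = 0"
      unfolding s_def nonneg_vec_def by (simp add: sum_nonneg_eq_0_iff vec_eq_iff)
    thus ?thesis by simp
  next
    case False
    with x have "0 < s" unfolding s_def nonneg_vec_def by (simp add: sum_nonneg less_le)
    hence "(1 / s) *\<^sub>R x \<in> standard_simplex"
      using x by (simp add: standard_simplex_def nonneg_vec_def s_def sum_divide_distrib[symmetric])
    from assms(2)[OF this] \<open>0 < s\<close> show ?thesis
      by (simp add: matrix_vector_mult_scaleR zero_le_divide_iff mult_le_0_iff)
  qed
qed

lemma copositive_face_bound: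
  fixes A :: "real^'n^'n"
  assumes "copositive A" and "\<nexists>u. is_zero_of A u \<and> supp u \<subseteq> J"
  shows "\<exists>e>0. \<forall>x\<in>standard_simplex. supp x \<subseteq> J \<longrightarrow> e \<le> x \<bullet> (A *v x)"
proof (cases "standard_simplex \<inter> {x. supp x \<subseteq> J} = {}")
  case True
  thus ?thesis by (intro exI[of _ 1]) auto
next
  case False
  obtain x0 where x0: "x0 \<in> standard_simplex" "supp x0 \<subseteq> J"
    and minimal: "\<And>y. y \<in> standard_simplex \<inter> {x. supp x \<subseteq> J} \<Longrightarrow> x0 \<bullet> (A *v x0) \<le> y \<bullet> (A *v y)"
    using continuous_attains_inf[OF compact_standard_simplex_face False continuous_on_quadratic_form]
    by blast
  have "x0 \<noteq> 0" "nonneg_vec x0" using x0(1) by (auto simp: standard_simplex_def)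
  with assms x0(2) have "0 < x0 \<bullet> (A *v x0)"
    by (auto simp: is_zero_of_def copositive_def less_le)
  with minimal show ?thesis by (intro exI[of _ "x0 \<bullet> (A *v x0)"]) auto
qed

lemma copositive_uniform_face_bound:
  fixes A :: "real^'n^'n"
  assumes "copositive A"
  shows "\<exists>e>0. \<forall>x\<in>standard_simplex.
    (\<nexists>u. is_zero_of A u \<and> supp u \<subseteq> supp x) \<longrightarrow> e \<le> x \<bullet> (A *v x)"
proof -
  define \<J> where "\<J> = {J. \<nexists>u. is_zero_of A u \<and> supp u \<subseteq> J}"
  have "\<forall>J\<in>\<J>. \<exists>e>0. \<forall>x\<in>standard_simplex. supp x \<subseteq> J \<longrightarrow> e \<le> x \<bullet> (A *v x)"
    using copositive_face_bound[OF assms] by (simp add: \<J>_def)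
  from bchoice[OF this] obtain E where
    E: "\<forall>J\<in>\<J>. 0 < E J \<and> (\<forall>x\<in>standard_simplex. supp x \<subseteq> J \<longrightarrow> E J \<le> x \<bullet> (A *v x))" ..
  define e where "e = Min (insert 1 (E ` \<J>))"
  have "0 < e" using E by (simp add: e_def)
  moreover have "e \<le> x \<bullet> (A *v x)"
    if "x \<in> standard_simplex" and "supp x \<in> \<J>" for x
  proof -
    have "e \<le> E (supp x)" using that(2) by (simp add: e_def)
    also have "\<dots> \<le> x \<bullet> (A *v x)" using E that by blast
    finally show ?thesis .
  qed
  ultimately show ?thesis by (auto simp: \<J>_def)
qed

lemma standard_simplex_minimizer_gradient_le:
  fixes B :: "real^'n^'n"
  assumes "transpose B = B" and "x \<in> standard_simplex"
    and minimal: "\<And>y. y \<in> standard_simplex \<Longrightarrow> x \<bullet> (B *v x) \<le> y \<bullet> (B *v y)"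
    and "x $ j \<noteq> 0"
  shows "(B *v x) $ j \<le> (B *v x) $ i"
proof (cases "i = j")
  case False
  define d :: "real^'n" where "d = axis i 1 - axis j 1"
  have x_nonneg: "0 \<le> x $ k" for k
    using assms(2) by (simp add: standard_simplex_def nonneg_vec_def)
  with assms(4) have "0 < x $ j" by (simp add: less_le)
  hence "0 \<le> 2 * (d \<bullet> (B *v x))"
  proof (rule linear_coeff_nonneg)
    fix t :: real assume t: "0 < t" "t < x $ j"
    have "nonneg_vec (x + t *\<^sub>R d)"
      unfolding nonneg_vec_def
    proof
      fix k
      show "0 \<le> (x + t *\<^sub>R d) $ k"
        using x_nonneg[of k] t False by (auto simp: d_def axis_def)
    qed
    moreover have "(\<Sum>k\<in>UNIV. (x + t *\<^sub>R d) $ k) = (\<Sum>k\<in>UNIV. x $ k) + t * (\<Sum>k\<in>UNIV. d $ k)"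
      by (simp add: sum.distrib sum_distrib_left)
    moreover have "(\<Sum>k\<in>UNIV. d $ k) = 0"
      by (simp add: d_def sum_subtractf axis_def)
    ultimately have "x + t *\<^sub>R d \<in> standard_simplex"
      using assms(2) by (simp add: standard_simplex_def)
    from minimal[OF this] show "0 \<le> t * (2 * (d \<bullet> (B *v x))) + t\<^sup>2 * (d \<bullet> (B *v d))"
      using quadratic_form_add_scaleR[OF assms(1), of x t d] by simp
  qed
  thus ?thesis by (simp add: d_def inner_diff_left inner_axis')
qed simp

lemma standard_simplex_minimizer_gradient:
  fixes B :: "real^'n^'n"
  assumes "transpose B = B" and "x \<in> standard_simplex"
    and "\<And>y. y \<in> standard_simplex \<Longrightarrow> x \<bullet> (B *v x) \<le> y \<bullet> (B *v y)"
    and "x $ j \<noteq> 0"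
  shows "(B *v x) $ j = x \<bullet> (B *v x)"
proof -
  have const: "(B *v x) $ k = (B *v x) $ j" if "x $ k \<noteq> 0" for k
    using standard_simplex_minimizer_gradient_le[OF assms(1-3)] that assms(4)
    by (meson order_antisym)
  have "x \<bullet> (B *v x) = (\<Sum>k\<in>UNIV. x $ k * (B *v x) $ k)"
    by (rule quadratic_form_eq_sum)
  also have "\<dots> = (\<Sum>k\<in>UNIV. x $ k * (B *v x) $ j)"
  proof (rule sum.cong[OF refl])
    fix k
    show "x $ k * (B *v x) $ k = x $ k * (B *v x) $ j"
      by (cases "x $ k = 0") (simp_all add: const[of k])
  qed
  also have "\<dots> = (B *v x) $ j"
    using assms(2) by (simp add: standard_simplex_def sum_distrib_right[symmetric])
  finally show ?thesis by simp
qed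

lemma standard_simplex_minimizer_inner:
  fixes B :: "real^'n^'n"
  assumes "transpose B = B" and "x \<in> standard_simplex"
    and "\<And>y. y \<in> standard_simplex \<Longrightarrow> x \<bullet> (B *v x) \<le> y \<bullet> (B *v y)"
    and "supp u \<subseteq> supp x"
  shows "u \<bullet> (B *v x) = (x \<bullet> (B *v x)) * (\<Sum>k\<in>UNIV. u $ k)"
proof -
  have "u \<bullet> (B *v x) = (\<Sum>k\<in>UNIV. u $ k * (B *v x) $ k)"
    by (rule quadratic_form_eq_sum)
  also have "\<dots> = (\<Sum>k\<in>UNIV. u $ k * (x \<bullet> (B *v x)))"
  proof (rule sum.cong[OF refl])
    fix k
    show "u $ k * (B *v x) $ k = u $ k * (x \<bullet> (B *v x))"
      using standard_simplex_minimizer_gradient[OF assms(1-3), of k] assms(4)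
      by (cases "u $ k = 0") (auto simp: supp_def)
  qed
  finally show ?thesis by (simp add: sum_distrib_right mult.commute)
qed

lemma standard_simplex_minimizer_nonneg:
  fixes B :: "real^'n^'n"
  assumes "transpose B = B" and "x \<in> standard_simplex"
    and "\<And>y. y \<in> standard_simplex \<Longrightarrow> x \<bullet> (B *v x) \<le> y \<bullet> (B *v y)"
    and "nonneg_vec u" and "u \<noteq> 0" and "supp u \<subseteq> supp x" and "0 \<le> u \<bullet> (B *v x)"
  shows "0 \<le> x \<bullet> (B *v x)"
proof -
  obtain k where "u $ k \<noteq> 0" using assms(5) by (auto simp: vec_eq_iff)
  with assms(4) have "0 < (\<Sum>k\<in>UNIV. u $ k)"
    by (intro sum_pos2[of UNIV k]) (simp_all add: nonneg_vec_def less_le)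
  with assms(7) show ?thesis
    by (simp add: standard_simplex_minimizer_inner[OF assms(1-3,6)] zero_le_mult_iff)
qed

lemma standard_simplex_minimizer_exists:
  fixes B :: "real^'n^'n"
  shows "\<exists>x\<in>standard_simplex. \<forall>y\<in>standard_simplex. x \<bullet> (B *v x) \<le> y \<bullet> (B *v y)"
proof (rule continuous_attains_inf[OF _ _ continuous_on_quadratic_form])
  show "compact (standard_simplex :: (real^'n) set)"
    using compact_standard_simplex_face[of UNIV] by simp
  have "axis undefined 1 \<in> (standard_simplex :: (real^'n) set)"
    by (simp add: standard_simplex_def nonneg_vec_def axis_def)
  thus "(standard_simplex :: (real^'n) set) \<noteq> {}" by blast
qed

text \<open>\<open>\<epsilon>\<close> is chosen so that \<open>\<epsilon> (a \<bullet> x)\<^sup>2 \<le> \<epsilon> |a|\<^sup>2\<close> stays below the uniform bound of \<open>A\<close>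
  on faces of the simplex carrying no zero.\<close>

lemma copositive_diff_outer:
  fixes A :: "real^'n^'n"
  assumes cop: "copositive A" and orth: "\<And>u. is_zero_of A u \<Longrightarrow> a \<bullet> u = 0"
  shows "\<exists>\<epsilon>>0. copositive (A - \<epsilon> *\<^sub>R outer a)"
proof -
  obtain e where e: "0 < e" and face: "\<forall>x\<in>standard_simplex.
      (\<nexists>u. is_zero_of A u \<and> supp u \<subseteq> supp x) \<longrightarrow> e \<le> x \<bullet> (A *v x)"
    using copositive_uniform_face_bound[OF cop] by blast
  define \<epsilon> where "\<epsilon> = e / ((norm a)\<^sup>2 + 1)"
  have "0 < (norm a)\<^sup>2 + 1" by (simp add: add_nonneg_pos)
  with e have \<epsilon>_pos: "0 < \<epsilon>" by (simp add: \<epsilon>_def)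
  have small: "\<epsilon> * (a \<bullet> x)\<^sup>2 < e" if "x \<in> standard_simplex" for x
  proof -
    have "\<epsilon> * (a \<bullet> x)\<^sup>2 \<le> \<epsilon> * (norm a)\<^sup>2"
      using standard_simplex_inner_square_le[OF that] \<epsilon>_pos by simp
    also have "\<dots> < e"
      using e \<open>0 < (norm a)\<^sup>2 + 1\<close> by (simp add: \<epsilon>_def field_simps)
    finally show ?thesis .
  qed
  define B where "B = A - \<epsilon> *\<^sub>R outer a"
  have sym_A: "transpose A = A" using cop by (simp add: copositive_def)
  hence sym_B: "transpose B = B" by (simp add: B_def transpose_diff_outer)
  have B_form: "x \<bullet> (B *v y) = x \<bullet> (A *v y) - \<epsilon> * ((a \<bullet> x) * (a \<bullet> y))" for x y
    by (simp add: B_def inner_diff_outer_mult_vec)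
  obtain x0 where x0: "x0 \<in> standard_simplex"
    and minimal: "\<And>y. y \<in> standard_simplex \<Longrightarrow> x0 \<bullet> (B *v x0) \<le> y \<bullet> (B *v y)"
    using standard_simplex_minimizer_exists[of B] by blast
  have "0 \<le> x0 \<bullet> (B *v x0)"
  proof (cases "\<exists>u. is_zero_of A u \<and> supp u \<subseteq> supp x0")
    case False
    from face[rule_format, OF x0 this] small[OF x0] show ?thesis
      by (simp add: B_form power2_eq_square)
  next
    case True
    then obtain u where u: "is_zero_of A u" "supp u \<subseteq> supp x0" by blast
    have "0 \<le> x0 \<bullet> (A *v u)"
      using x0 zero_of_copositive_mult_nonneg[OF cop u(1)] unfolding quadratic_form_eq_sum
      by (auto simp: standard_simplex_def nonneg_vec_def intro!: sum_nonneg)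
    also have "x0 \<bullet> (A *v u) = u \<bullet> (B *v x0)"
      using B_form[of u x0] orth[OF u(1)] inner_matrix_vector_mult_commute[OF sym_A, of u x0]
      by simp
    finally show ?thesis
      using standard_simplex_minimizer_nonneg[OF sym_B x0 minimal _ _ u(2)] u(1)
      by (simp add: is_zero_of_def)
  qed
  with minimal have "0 \<le> x \<bullet> (B *v x)" if "x \<in> standard_simplex" for x
    using that by (meson order_trans)
  with sym_B have "copositive B" by (rule copositive_if_standard_simplex)
  with \<epsilon>_pos show ?thesis by (auto simp: B_def)
qed

lemma psd_mult_eq_0_if_copositive_diff:
  fixes A M :: "real^'n^'n"
  assumes "copositive (A - \<gamma> *\<^sub>R M)" and "0 < \<gamma>" and "psd M" and "is_zero_of A u"
  shows "M *v u = 0"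
proof (rule psd_mult_eq_0_if_quadratic_form_eq_0[OF assms(3)])
  have "0 \<le> u \<bullet> ((A - \<gamma> *\<^sub>R M) *v u)"
    using assms(1,4) by (simp add: copositive_def is_zero_of_def)
  also have "\<dots> = - \<gamma> * (u \<bullet> (M *v u))"
    using assms(4) by (simp add: matrix_vector_mult_diff_rdistrib
        scaleR_matrix_vector_assoc[symmetric] inner_diff_right is_zero_of_def)
  finally have "u \<bullet> (M *v u) \<le> 0" using assms(2) by (simp add: mult_le_0_iff)
  moreover have "0 \<le> u \<bullet> (M *v u)" using assms(3) by (simp add: psd_def)
  ultimately show "u \<bullet> (M *v u) = 0" by simp
qed

lemma irreducible_psd_if_span_minimal_zeros:
  fixes A :: "real^'n^'n"
  assumes "span {u. is_minimal_zero A u} = UNIV"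
  shows "irreducible_wrt A {M. psd M}"
  unfolding irreducible_wrt_def
proof
  assume "\<exists>\<gamma>>0. \<exists>M\<in>{M. psd M} - {0}. copositive (A - \<gamma> *\<^sub>R M)"
  then obtain \<gamma> M where "0 < \<gamma>" "psd M" "M \<noteq> 0" "copositive (A - \<gamma> *\<^sub>R M)"
    by blast
  have "subspace {v. M *v v = 0}"
    by (auto simp: subspace_def matrix_vector_right_distrib matrix_vector_mult_scaleR)
  moreover have "{u. is_minimal_zero A u} \<subseteq> {v. M *v v = 0}"
    using psd_mult_eq_0_if_copositive_diff[OF \<open>copositive (A - \<gamma> *\<^sub>R M)\<close> \<open>0 < \<gamma>\<close> \<open>psd M\<close>]
    by (auto simp: is_minimal_zero_def)
  ultimately have "span {u. is_minimal_zero A u} \<subseteq> {v. M *v v = 0}"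
    by (rule span_minimal[rotated])
  with assms have "M = 0" by (auto simp: matrix_eq)
  with \<open>M \<noteq> 0\<close> show False ..
qed

lemma span_minimal_zeros_if_irreducible_psd:
  fixes A :: "real^'n^'n"
  assumes "copositive A" and "irreducible_wrt A {M. psd M}"
  shows "span {u. is_minimal_zero A u} = UNIV"
proof (rule ccontr)
  assume "span {u. is_minimal_zero A u} \<noteq> UNIV"
  from span_not_UNIV_orthogonal[OF this] obtain a where "a \<noteq> 0"
    and a: "\<And>x. x \<in> span {u. is_minimal_zero A u} \<Longrightarrow> a \<bullet> x = 0"
    by blast
  have "a \<bullet> u = 0" if "is_zero_of A u" for u
    using a zero_in_span_minimal_zeros[OF assms(1) that] .
  from copositive_diff_outer[OF assms(1) this] obtain \<epsilon>
    where "0 < \<epsilon>" and "copositive (A - \<epsilon> *\<^sub>R outer a)"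
    by blast
  with assms(2) psd_outer[of a] \<open>a \<noteq> 0\<close> show False
    by (auto simp: irreducible_wrt_def outer_eq_0_iff)
qed

theorem theorem4p5:
  fixes A :: "real^'n^'n"
  assumes "copositive A"
  shows "(irreducible_wrt A {M. psd M} \<longleftrightarrow> span {u. is_minimal_zero A u} = UNIV)
    \<and> (irreducible_wrt A {M. psd M} \<longrightarrow>
         (\<exists>S. S \<subseteq> {u. is_minimal_zero A u} \<and> independent S \<and> card S = CARD('n)))"
proof -
  let ?Z = "{u. is_minimal_zero A u}"
  have irreducible_iff: "irreducible_wrt A {M. psd M} \<longleftrightarrow> span ?Z = UNIV"
    using span_minimal_zeros_if_irreducible_psd[OF assms] irreducible_psd_if_span_minimal_zeros
    by blast
  have "\<exists>S. S \<subseteq> ?Z \<and> independent S \<and> card S = CARD('n)" if "span ?Z = UNIV"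
  proof -
    obtain S where "S \<subseteq> ?Z" "independent S" "?Z \<subseteq> span S" "card S = dim ?Z"
      by (rule basis_exists)
    moreover have "dim ?Z = CARD('n)"
      using that dim_eq_full[of ?Z] by simp
    ultimately show ?thesis by auto
  qed
  with irreducible_iff show ?thesis by blast
qed

end
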